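(* Let $n\ge5$, let $\Delta$ be a non-singular $(d-1)$-complex on $[n-1]$ with $1\le d\le n-4$, and let $\Delta'$ be any complex on $[n-1]$ (of any dimension). Then $D_\Delta=D_{\Delta'}$ in $\operatorname{Pic}(\overline{\mathcal M}_{0,n})$ if and only if $\Delta'=\Delta$.
   Context: $\operatorname{Pic}(\overline{\mathcal M}_{0,n})=\mathbb ZH\oplus\bigoplus_I\mathbb ZE_I$ (sum over $I\subseteq[n-1]$, $1\le|I|\le n-4$) via a fixed Kapranov blow-up presentation $\overline{\mathcal M}_{0,n}\cong\operatorname{Bl}\mathbb P^{n-3}$; $H$ is the hyperplane class and $E_I$ the exceptional divisors. A $k$-simplex on $[n-1]$ is a multiset of cardinality $k+1$ with entries in $[n-1]$, a $k$-complex is a finite set of distinct $k$-simplices; a simplex is singular if some entry has multiplicity $\ge2$, and a complex is non-singular if none of its simplices is singular. For a $k$-complex $\Delta$ put $D_\Delta=(k+1)H-\sum_I\big(k+1-\max_{\sigma\in\Delta}\sum_{i\in I}\operatorname{mult}_i(\sigma)\big)E_I$, where $\operatorname{mult}_i(\sigma)$ is the multiplicity of $i$ in $\sigma$. *)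

theory Defs
  imports Main "HOL-Library.Multiset"
begin

definition simplex :: "nat \<Rightarrow> nat \<Rightarrow> nat multiset \<Rightarrow> bool" where
  "simplex n k \<sigma> \<longleftrightarrow> size \<sigma> = k + 1 \<and> set_mset \<sigma> \<subseteq> {1..n-1}"

definition complex :: "nat \<Rightarrow> nat \<Rightarrow> nat multiset set \<Rightarrow> bool" where
  "complex n k \<Delta> \<longleftrightarrow> finite \<Delta> \<and> \<Delta> \<noteq> {} \<and> (\<forall>\<sigma>\<in>\<Delta>. simplex n k \<sigma>)"

definition singular_simplex :: "nat multiset \<Rightarrow> bool" where
  "singular_simplex \<sigma> \<longleftrightarrow> (\<exists>i. count \<sigma> i \<ge> 2)"

definition nonsingular :: "nat multiset set \<Rightarrow> bool" where
  "nonsingular \<Delta> \<longleftrightarrow> (\<forall>\<sigma>\<in>\<Delta>. \<not> singular_simplex \<sigma>)"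

text \<open>Index sets of the exceptional divisors E_I: I \<subseteq> [n-1], 1 \<le> |I| \<le> n-4.\<close>
definition exc_index :: "nat \<Rightarrow> nat set \<Rightarrow> bool" where
  "exc_index n I \<longleftrightarrow> I \<subseteq> {1..n-1} \<and> 1 \<le> card I \<and> card I \<le> n - 4"

text \<open>Elements of Pic(M_{0,n}) = Z H \<oplus> \<Oplus>_I Z E_I, represented by their coordinates:
  (coefficient of H, I \<mapsto> coefficient of E_I), with E-coordinates 0 outside the valid
  index sets, so equality of representatives is equality in Pic.\<close>
type_synonym pic = "int \<times> (nat set \<Rightarrow> int)"

definition D :: "nat \<Rightarrow> nat \<Rightarrow> nat multiset set \<Rightarrow> pic" where
  "D n k \<Delta> =
     (int (k + 1),
      \<lambda>I. if exc_index n I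
           then - (int (k + 1) - int (Max ((\<lambda>\<sigma>. \<Sum>i\<in>I. count \<sigma> i) ` \<Delta>)))
           else 0)"

end

theory Submission
  imports Defs
begin

text \<open>
  The H-coefficient of \<open>D\<^sub>\<Delta>\<close> fixes the dimension, and the E-coefficients record, for each
  admissible \<open>I\<close>, the largest weight \<open>\<Sum>\<^sub>i\<^sub>\<in>\<^sub>I mult\<^sub>i(\<sigma>)\<close> of a simplex of \<open>\<Delta>\<close>. Singletons
  \<open>{i}\<close> are admissible because \<open>n \<ge> 5\<close>, and there the weight is a single multiplicity, so
  \<open>\<Delta>'\<close> is non-singular along with \<open>\<Delta>\<close>. The support \<open>I\<close> of a simplex \<open>\<sigma>\<close> of \<open>\<Delta>\<close> has \<open>d \<le> n - 4\<close>
  elements, so it is admissible and its maximal weight is the full size \<open>d\<close>; hence some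
  simplex of \<open>\<Delta>'\<close> is supported inside \<open>I\<close>, and being non-singular of size \<open>d\<close> it equals \<open>\<sigma>\<close>.
  By symmetry \<open>\<Delta> = \<Delta>'\<close>.
\<close>

definition max_weight :: "nat multiset set \<Rightarrow> nat set \<Rightarrow> nat" where
  "max_weight \<Delta> I = Max ((\<lambda>\<sigma>. \<Sum>i\<in>I. count \<sigma> i) ` \<Delta>)"

lemma sum_count_eq_size_filter_mset:
  assumes "finite I"
  shows "(\<Sum>i\<in>I. count \<sigma> i) = size {#x \<in># \<sigma>. x \<in> I#}"
proof (induction \<sigma>)
  case empty
  show ?case by simp
next
  case (add a \<sigma>)
  have "(\<Sum>i\<in>I. count (add_mset a \<sigma>) i) = (\<Sum>i\<in>I. count \<sigma> i) + (\<Sum>i\<in>I. if i = a then 1 else 0)"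
    by (subst sum.distrib[symmetric]) (auto intro: sum.cong)
  then show ?case using add assms by simp
qed

lemma sum_count_le_size:
  "finite I \<Longrightarrow> (\<Sum>i\<in>I. count \<sigma> i) \<le> size \<sigma>"
  by (simp add: sum_count_eq_size_filter_mset)

lemma set_mset_subset_if_sum_count_eq_size:
  assumes "finite I" and "(\<Sum>i\<in>I. count \<sigma> i) = size \<sigma>"
  shows "set_mset \<sigma> \<subseteq> I"
  using assms size_filter_unsat_elem[of _ \<sigma> "\<lambda>x. x \<in> I"]
  by (fastforce simp: sum_count_eq_size_filter_mset)

lemma not_singular_simplex_iff: "\<not> singular_simplex \<sigma> \<longleftrightarrow> (\<forall>i. count \<sigma> i \<le> 1)"
  by (simp add: singular_simplex_def not_le numeral_2_eq_2 less_Suc_eq_le)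

lemma sum_count_set_mset: "(\<Sum>i\<in>set_mset \<sigma>. count \<sigma> i) = size \<sigma>"
  by (simp add: size_multiset_overloaded_eq)

lemma nonsingular_simplex_eq_if_set_mset_subset:
  assumes "\<not> singular_simplex \<tau>" and "set_mset \<tau> \<subseteq> set_mset \<sigma>" and "size \<tau> = size \<sigma>"
  shows "\<tau> = \<sigma>"
proof -
  have "count \<tau> x \<le> count \<sigma> x" for x
  proof (cases "x \<in># \<tau>")
    case True
    then have "0 < count \<sigma> x" using assms(2) by auto
    moreover have "count \<tau> x \<le> 1" using assms(1) by (simp add: not_singular_simplex_iff)
    ultimately show ?thesis by linarith
  qed (simp add: not_in_iff)
  then have "\<tau> \<subseteq># \<sigma>" by (simp add: subseteq_mset_def)
  then show ?thesis
    using assms(3) mset_subset_size subset_mset.le_less by fastforce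
qed

lemma card_set_mset_if_not_singular:
  assumes "\<not> singular_simplex \<sigma>"
  shows "card (set_mset \<sigma>) = size \<sigma>"
proof -
  have "count \<sigma> i = 1" if "i \<in># \<sigma>" for i
    using that assms by (simp add: not_singular_simplex_iff le_antisym)
  then show ?thesis
    by (simp flip: sum_count_set_mset)
qed

lemma max_weight_ge:
  "finite \<Delta> \<Longrightarrow> \<sigma> \<in> \<Delta> \<Longrightarrow> (\<Sum>i\<in>I. count \<sigma> i) \<le> max_weight \<Delta> I"
  unfolding max_weight_def by (rule Max_ge) auto

lemma max_weight_attained:
  assumes "finite \<Delta>" and "\<Delta> \<noteq> {}"
  obtains \<sigma> where "\<sigma> \<in> \<Delta>" and "(\<Sum>i\<in>I. count \<sigma> i) = max_weight \<Delta> I"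
proof -
  have "max_weight \<Delta> I \<in> (\<lambda>\<sigma>. \<Sum>i\<in>I. count \<sigma> i) ` \<Delta>"
    unfolding max_weight_def using assms by (intro Max_in) auto
  then show ?thesis using that by (metis (no_types, lifting) imageE)
qed

lemma D_eq_iff:
  "D n k \<Delta> = D n k' \<Delta>' \<longleftrightarrow> k = k' \<and> (\<forall>I. exc_index n I \<longrightarrow> max_weight \<Delta> I = max_weight \<Delta>' I)"
proof
  assume eq: "D n k \<Delta> = D n k' \<Delta>'"
  have "int (k + 1) = int (k' + 1)" using arg_cong[OF eq, of fst] by (simp add: D_def)
  moreover have "max_weight \<Delta> I = max_weight \<Delta>' I" if "exc_index n I" for I
    using fun_cong[OF arg_cong[OF eq, of snd], of I] that \<open>int (k + 1) = int (k' + 1)\<close>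
    by (simp add: D_def max_weight_def)
  ultimately show "k = k' \<and> (\<forall>I. exc_index n I \<longrightarrow> max_weight \<Delta> I = max_weight \<Delta>' I)"
    by simp
qed (auto simp: D_def max_weight_def[symmetric])

lemma complex_dim_unique: "complex n k \<Delta> \<Longrightarrow> complex n k' \<Delta> \<Longrightarrow> k = k'"
  unfolding complex_def simplex_def by force

lemma nonsingular_if_max_weights_eq:
  assumes "5 \<le> n" and "complex n k \<Delta>" and "nonsingular \<Delta>" and "complex n k' \<Delta>'"
    and weights: "\<forall>I. exc_index n I \<longrightarrow> max_weight \<Delta> I = max_weight \<Delta>' I"
  shows "nonsingular \<Delta>'"
  unfolding nonsingular_def not_singular_simplex_iff
proof (intro ballI allI)
  fix \<tau> i assume "\<tau> \<in> \<Delta>'"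
  show "count \<tau> i \<le> 1"
  proof (cases "i \<in># \<tau>")
    case True
    have "finite \<Delta>" "\<Delta> \<noteq> {}" "finite \<Delta>'"
      using assms(2,4) by (auto simp: complex_def)
    then obtain \<sigma> where "\<sigma> \<in> \<Delta>" and \<sigma>: "count \<sigma> i = max_weight \<Delta> {i}"
      using max_weight_attained[of \<Delta> "{i}"] by auto
    have "i \<in> {1..n-1}"
      using True \<open>\<tau> \<in> \<Delta>'\<close> assms(4) by (fastforce simp: complex_def simplex_def)
    then have "exc_index n {i}" using assms(1) by (simp add: exc_index_def)
    then have "count \<tau> i \<le> max_weight \<Delta> {i}"
      using weights max_weight_ge[OF \<open>finite \<Delta>'\<close> \<open>\<tau> \<in> \<Delta>'\<close>, of "{i}"] by simp
    also have "\<dots> \<le> 1"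
      using \<sigma> \<open>\<sigma> \<in> \<Delta>\<close> assms(3) unfolding nonsingular_def not_singular_simplex_iff by metis
    finally show ?thesis .
  qed (simp add: not_in_iff)
qed

lemma nonsingular_complex_subset_if_max_weights_eq:
  assumes "complex n k \<Delta>" and "nonsingular \<Delta>" and "complex n k \<Delta>'" and "nonsingular \<Delta>'"
    and "k + 1 \<le> n - 4"
    and weights: "\<forall>I. exc_index n I \<longrightarrow> max_weight \<Delta> I = max_weight \<Delta>' I"
  shows "\<Delta> \<subseteq> \<Delta>'"
proof
  fix \<sigma> assume "\<sigma> \<in> \<Delta>"
  let ?I = "set_mset \<sigma>"
  have \<sigma>: "simplex n k \<sigma>" "\<not> singular_simplex \<sigma>"
    using assms(1,2) \<open>\<sigma> \<in> \<Delta>\<close> by (auto simp: complex_def nonsingular_def)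
  have "card ?I = k + 1"
    using \<sigma> card_set_mset_if_not_singular by (simp add: simplex_def)
  then have "exc_index n ?I" using \<sigma>(1) assms(5) by (auto simp: exc_index_def simplex_def)
  have "finite \<Delta>" "finite \<Delta>'" "\<Delta>' \<noteq> {}"
    using assms(1,3) by (auto simp: complex_def)
  then obtain \<tau> where "\<tau> \<in> \<Delta>'" and \<tau>: "(\<Sum>i\<in>?I. count \<tau> i) = max_weight \<Delta>' ?I"
    using max_weight_attained[of \<Delta>' ?I] by auto
  have \<tau>': "simplex n k \<tau>" "\<not> singular_simplex \<tau>"
    using assms(3,4) \<open>\<tau> \<in> \<Delta>'\<close> by (auto simp: complex_def nonsingular_def)
  have "size \<tau> = size \<sigma>"
    using \<sigma>(1) \<tau>'(1) by (simp add: simplex_def)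
  also have "size \<sigma> \<le> max_weight \<Delta> ?I"
    using max_weight_ge[OF \<open>finite \<Delta>\<close> \<open>\<sigma> \<in> \<Delta>\<close>] sum_count_set_mset by metis
  also have "\<dots> = (\<Sum>i\<in>?I. count \<tau> i)"
    using weights \<open>exc_index n ?I\<close> \<tau> by simp
  finally have "(\<Sum>i\<in>?I. count \<tau> i) = size \<tau>"
    using sum_count_le_size[of ?I \<tau>] by simp
  then have "set_mset \<tau> \<subseteq> ?I"
    by (simp add: set_mset_subset_if_sum_count_eq_size)
  then have "\<tau> = \<sigma>"
    using \<tau>'(2) \<open>size \<tau> = size \<sigma>\<close> nonsingular_simplex_eq_if_set_mset_subset by blast
  then show "\<sigma> \<in> \<Delta>'" using \<open>\<tau> \<in> \<Delta>'\<close> by simp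
qed

theorem mainTheorem3:
  fixes n d k' :: nat and \<Delta> \<Delta>' :: "nat multiset set"
  assumes "n \<ge> 5"
    and "1 \<le> d" and "d \<le> n - 4"
    and "complex n (d - 1) \<Delta>" and "nonsingular \<Delta>"
    and "complex n k' \<Delta>'"
  shows "D n (d - 1) \<Delta> = D n k' \<Delta>' \<longleftrightarrow> \<Delta>' = \<Delta>"
proof
  assume "D n (d - 1) \<Delta> = D n k' \<Delta>'"
  then have "k' = d - 1"
    and weights: "\<forall>I. exc_index n I \<longrightarrow> max_weight \<Delta> I = max_weight \<Delta>' I"
    by (simp_all add: D_eq_iff)
  have complex': "complex n (d - 1) \<Delta>'" using assms(6) \<open>k' = d - 1\<close> by simp
  have nonsingular': "nonsingular \<Delta>'"
    using nonsingular_if_max_weights_eq[OF assms(1,4,5,6) weights] .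
  have dim: "d - 1 + 1 \<le> n - 4" using assms(2,3) by simp
  have "\<Delta> \<subseteq> \<Delta>'"
    by (rule nonsingular_complex_subset_if_max_weights_eq[OF assms(4,5) complex' nonsingular' dim weights])
  moreover have "\<Delta>' \<subseteq> \<Delta>"
    using weights by (intro nonsingular_complex_subset_if_max_weights_eq[OF complex' nonsingular' assms(4,5) dim]) simp
  ultimately show "\<Delta>' = \<Delta>" by blast
next
  assume "\<Delta>' = \<Delta>"
  then have "k' = d - 1" using complex_dim_unique assms(4,6) by blast
  then show "D n (d - 1) \<Delta> = D n k' \<Delta>'" using \<open>\<Delta>' = \<Delta>\<close> by simp
qed

end
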